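(* Let $(X,d,\kappa)$ be a digital metric space with $1<|X|<\infty$, and let $T:X\to X$ be a weakly uniformly strict digital contraction. Then $T$ is neither one-to-one nor onto.
   Context: A digital metric space is a triple $(X,d,\kappa)$ where $X\subset\mathbb{Z}^n$ for some positive integer $n$, $\kappa$ is an adjacency relation on $X$, and $d$ is a metric on $X$. $T:X\to X$ is a weakly uniformly strict digital contraction if for every $\varepsilon>0$ there exists $\delta>0$ such that for all $x,y\in X$, $\varepsilon\le d(x,y)<\varepsilon+\delta$ implies $d(T(x),T(y))<\varepsilon$. *)

theory Defs
  imports "HOL-Analysis.Analysis"
begin

definition metric_on :: "'a set \<Rightarrow> ('a \<Rightarrow> 'a \<Rightarrow> real) \<Rightarrow> bool" where
  "metric_on X d \<longleftrightarrow>
     (\<forall>x\<in>X. \<forall>y\<in>X. 0 \<le> d x y) \<and>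
     (\<forall>x\<in>X. \<forall>y\<in>X. d x y = 0 \<longleftrightarrow> x = y) \<and>
     (\<forall>x\<in>X. \<forall>y\<in>X. d x y = d y x) \<and>
     (\<forall>x\<in>X. \<forall>y\<in>X. \<forall>z\<in>X. d x z \<le> d x y + d y z)"

definition adjacency_on :: "'a set \<Rightarrow> ('a \<Rightarrow> 'a \<Rightarrow> bool) \<Rightarrow> bool" where
  "adjacency_on X \<kappa> \<longleftrightarrow>
     (\<forall>x y. \<kappa> x y \<longrightarrow> x \<in> X \<and> y \<in> X) \<and>
     (\<forall>x y. \<kappa> x y \<longrightarrow> \<kappa> y x) \<and>
     (\<forall>x. \<not> \<kappa> x x)"

definition digital_metric_space ::
  "(int ^ 'n) set \<Rightarrow> (int ^ 'n \<Rightarrow> int ^ 'n \<Rightarrow> real) \<Rightarrow> (int ^ 'n \<Rightarrow> int ^ 'n \<Rightarrow> bool) \<Rightarrow> bool" where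
  "digital_metric_space X d \<kappa> \<longleftrightarrow> metric_on X d \<and> adjacency_on X \<kappa>"

definition weakly_uniformly_strict_digital_contraction ::
  "'a set \<Rightarrow> ('a \<Rightarrow> 'a \<Rightarrow> real) \<Rightarrow> ('a \<Rightarrow> 'a) \<Rightarrow> bool" where
  "weakly_uniformly_strict_digital_contraction X d T \<longleftrightarrow>
     (\<forall>\<epsilon>>0. \<exists>\<delta>>0. \<forall>x\<in>X. \<forall>y\<in>X.
        \<epsilon> \<le> d x y \<and> d x y < \<epsilon> + \<delta> \<longrightarrow> d (T x) (T y) < \<epsilon>)"

end

theory Submission
  imports Defs
begin

text \<open>A weakly uniformly strict contraction strictly shrinks every positive distance, so on a
  finite space it cannot reach a pair realising the maximal distance; hence it is not onto, and a
  self-map of a finite set that is not onto is not one-to-one either.\<close>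

lemma metric_on_dist_pos:
  assumes "metric_on X d" "x \<in> X" "y \<in> X" "x \<noteq> y"
  shows "0 < d x y"
  using assms unfolding metric_on_def by (metis order_le_less)

lemma metric_on_dist_self:
  assumes "metric_on X d" "x \<in> X"
  shows "d x x = 0"
  using assms unfolding metric_on_def by blast

lemma weakly_uniformly_strict_digital_contraction_dist_less:
  assumes "metric_on X d" "weakly_uniformly_strict_digital_contraction X d T"
    and "x \<in> X" "y \<in> X" "x \<noteq> y"
  shows "d (T x) (T y) < d x y"
proof -
  have "0 < d x y"
    using metric_on_dist_pos assms(1,3-5) .
  then obtain \<delta> where "0 < \<delta>" and shrink: "\<forall>p\<in>X. \<forall>q\<in>X.
      d x y \<le> d p q \<and> d p q < d x y + \<delta> \<longrightarrow> d (T p) (T q) < d x y"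
    using assms(2) unfolding weakly_uniformly_strict_digital_contraction_def by blast
  then show ?thesis
    using assms(3,4) by auto
qed

lemma dist_decreasing_not_surj:
  assumes "metric_on X d" "finite X" "1 < card X"
    and dec: "\<And>x y. x \<in> X \<Longrightarrow> y \<in> X \<Longrightarrow> x \<noteq> y \<Longrightarrow> d (T x) (T y) < d x y"
  shows "T ` X \<noteq> X"
proof
  assume onto: "T ` X = X"
  let ?D = "(\<lambda>(x, y). d x y) ` (X \<times> X)"
  have fin: "finite ?D"
    using assms(2) by simp
  have max_ge: "d x y \<le> Max ?D" if "x \<in> X" "y \<in> X" for x y
    using fin that by (intro Max_ge) auto
  obtain u v where uv: "u \<in> X" "v \<in> X" "u \<noteq> v"
  proof -
    have "\<not> card X \<le> Suc 0"
      using assms(3) by simp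
    then show ?thesis
      using that card_le_Suc0_iff_eq[OF assms(2)] by blast
  qed
  have nonempty: "?D \<noteq> {}"
    using uv by auto
  obtain a b where ab: "a \<in> X" "b \<in> X" "d a b = Max ?D"
    using Max_in[OF fin nonempty] by auto
  have "0 < d a b"
    using metric_on_dist_pos[OF assms(1) uv] max_ge[OF uv(1,2)] ab(3) by linarith
  then have "a \<noteq> b"
    using metric_on_dist_self[OF assms(1) ab(1)] by (metis less_irrefl)
  obtain a' b' where "a' \<in> X" "b' \<in> X" "T a' = a" "T b' = b"
    using onto ab(1,2) by (metis imageE)
  then have "d a b < d a' b'"
    using dec[of a' b'] \<open>a \<noteq> b\<close> by blast
  then show False
    using max_ge[OF \<open>a' \<in> X\<close> \<open>b' \<in> X\<close>] ab(3) by simp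
qed

theorem proposition8p4:
  fixes X :: "(int ^ 'n) set" and d :: "int ^ 'n \<Rightarrow> int ^ 'n \<Rightarrow> real"
    and \<kappa> :: "int ^ 'n \<Rightarrow> int ^ 'n \<Rightarrow> bool" and T :: "int ^ 'n \<Rightarrow> int ^ 'n"
  assumes "digital_metric_space X d \<kappa>"
    and "finite X" and "1 < card X"
    and "T ` X \<subseteq> X"
    and "weakly_uniformly_strict_digital_contraction X d T"
  shows "\<not> inj_on T X \<and> T ` X \<noteq> X"
proof -
  have metric: "metric_on X d"
    using assms(1) by (simp add: digital_metric_space_def)
  have not_onto: "T ` X \<noteq> X"
    using dist_decreasing_not_surj[OF metric assms(2,3)]
      weakly_uniformly_strict_digital_contraction_dist_less[OF metric assms(5)] by blast
  then have "\<not> inj_on T X"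
    using assms(2,4) endo_inj_surj by blast
  with not_onto show ?thesis by simp
qed

end
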